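(* For $u\in\mathcal B$ and $n\ge0$ let $R'_n[u]:=R'[u,\dots,u]$ ($n$ arguments), so $R'_0[u]=\mathrm{id}_{\mathcal B}$. Then for $n\ge1$, $R'_n[u]=\sum_{i=0}^{n-2}R'_i[u]\circ M\big(\gamma[u\,R'_{n-i-2}[u](u)]\big)+R'_{n-1}[u]\circ a^0(u)$, where $M(c)$ denotes left multiplication by $c\in\mathcal B$ and $a^0(u)$ is the map $v\mapsto\Lambda(u\otimes v)$ on $\mathcal B$.
   Context: Let $\mathcal B$ be a unital $*$-algebra with star-linear maps $\gamma:\mathcal B\to\mathcal B$ and $\Lambda:\mathcal B\otimes_{alg}\mathcal B\to\mathcal B$. The linear operators $R'[u_1,\dots,u_k]$ on $\mathcal B$ ($k\ge0$) are defined recursively: $R'[\emptyset]=\mathrm{id}_{\mathcal B}$, and $R'[u_1,\dots,u_k]=\sum_{\pi\in\mathrm{Int}(k)}w(V_1)\circ\cdots\circ w(V_m)$, where $\mathrm{Int}(k)$ is the set of interval partitions of $\{1,\dots,k\}$, $V_1,\dots,V_m$ are the blocks of $\pi$ from left to right, $w(\{i\})$ is $v\mapsto\Lambda(u_i\otimes v)$, and for a block $V=\{p,\dots,q\}$ with $q>p$, $w(V)$ is left multiplication by $\gamma\big[u_p\,R'[u_{p+1},\dots,u_{q-1}](u_q)\big]$. *)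

theory Defs
  imports Complex_Main
begin

definition star_algebra :: "(complex \<Rightarrow> 'a::ring_1 \<Rightarrow> 'a) \<Rightarrow> ('a \<Rightarrow> 'a) \<Rightarrow> bool" where
  "star_algebra sm st \<longleftrightarrow>
     (\<forall>a x y. sm a (x + y) = sm a x + sm a y) \<and>
     (\<forall>a b x. sm (a + b) x = sm a x + sm b x) \<and>
     (\<forall>a b x. sm a (sm b x) = sm (a * b) x) \<and>
     (\<forall>x. sm 1 x = x) \<and>
     (\<forall>a x y. sm a x * y = sm a (x * y)) \<and>
     (\<forall>a x y. x * sm a y = sm a (x * y)) \<and>
     (\<forall>x y. st (x + y) = st x + st y) \<and>
     (\<forall>a x. st (sm a x) = sm (cnj a) (st x)) \<and>
     (\<forall>x y. st (x * y) = st y * st x) \<and>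
     (\<forall>x. st (st x) = x)"

definition star_linear :: "(complex \<Rightarrow> 'a::ring_1 \<Rightarrow> 'a) \<Rightarrow> ('a \<Rightarrow> 'a) \<Rightarrow> ('a \<Rightarrow> 'a) \<Rightarrow> bool" where
  "star_linear sm st f \<longleftrightarrow>
     (\<forall>x y. f (x + y) = f x + f y) \<and> (\<forall>a x. f (sm a x) = sm a (f x)) \<and>
     (\<forall>x. f (st x) = st (f x))"

text \<open>Star-linear map on the algebraic tensor product B \<otimes> B, represented (by the universal
  property) as the bilinear map L with L x y = \<Lambda>(x \<otimes> y); the star on B \<otimes> B is
  (x \<otimes> y)* = x* \<otimes> y*.\<close>
definition star_bilinear :: "(complex \<Rightarrow> 'a::ring_1 \<Rightarrow> 'a) \<Rightarrow> ('a \<Rightarrow> 'a) \<Rightarrow> ('a \<Rightarrow> 'a \<Rightarrow> 'a) \<Rightarrow> bool" where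
  "star_bilinear sm st L \<longleftrightarrow>
     (\<forall>x y z. L (x + y) z = L x z + L y z) \<and> (\<forall>x y z. L x (y + z) = L x y + L x z) \<and>
     (\<forall>a x y. L (sm a x) y = sm a (L x y)) \<and> (\<forall>a x y. L x (sm a y) = sm a (L x y)) \<and>
     (\<forall>x y. L (st x) (st y) = st (L x y))"

text \<open>Interval partitions of {1..k}, encoded as compositions of k: the list of block sizes
  from left to right.\<close>
definition compositions :: "nat \<Rightarrow> nat list set" where
  "compositions k = {c. (\<forall>b\<in>set c. 0 < b) \<and> sum_list c = k}"

fun split_blocks :: "nat list \<Rightarrow> 'a list \<Rightarrow> 'a list list" where
  "split_blocks [] us = []"
| "split_blocks (b # bs) us = take b us # split_blocks bs (drop b us)"

text \<open>R' with a fuel parameter (fuel length us suffices, since inner calls are on strictly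
  shorter lists).  For a block blk = [u_p,...,u_q]: if it is a singleton, w = (v \<mapsto> \<Lambda>(u_p \<otimes> v));
  otherwise w = left multiplication by \<gamma>(u_p * R'[u_(p+1),...,u_(q-1)](u_q)).\<close>
fun Rfuel :: "('a::ring_1 \<Rightarrow> 'a) \<Rightarrow> ('a \<Rightarrow> 'a \<Rightarrow> 'a) \<Rightarrow> nat \<Rightarrow> 'a list \<Rightarrow> 'a \<Rightarrow> 'a" where
  "Rfuel \<gamma> \<Lambda> 0 us = id"
| "Rfuel \<gamma> \<Lambda> (Suc n) us =
     (if us = [] then id
      else (\<lambda>v. \<Sum>c\<in>compositions (length us).
              foldr (\<circ>)
                (map (\<lambda>blk. if length blk = 1 then (\<lambda>x. \<Lambda> (hd blk) x)
                             else (\<lambda>x. \<gamma> (hd blk * Rfuel \<gamma> \<Lambda> n (butlast (tl blk)) (last blk)) * x))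
                     (split_blocks c us)) id v))"

definition Rprime :: "('a::ring_1 \<Rightarrow> 'a) \<Rightarrow> ('a \<Rightarrow> 'a \<Rightarrow> 'a) \<Rightarrow> 'a list \<Rightarrow> 'a \<Rightarrow> 'a" where
  "Rprime \<gamma> \<Lambda> us = Rfuel \<gamma> \<Lambda> (length us) us"

definition Rn :: "('a::ring_1 \<Rightarrow> 'a) \<Rightarrow> ('a \<Rightarrow> 'a \<Rightarrow> 'a) \<Rightarrow> nat \<Rightarrow> 'a \<Rightarrow> 'a \<Rightarrow> 'a" where
  "Rn \<gamma> \<Lambda> n u = Rprime \<gamma> \<Lambda> (replicate n u)"

end

theory Submission
  imports Defs
begin

text \<open>Splitting off the last block \<open>V\<close> of an interval partition of \<open>{1,\<dots>,n}\<close>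
  leaves an arbitrary interval partition of \<open>{1,\<dots>,n - |V|}\<close>, so the defining sum
  factors as \<open>R'[u\<^sub>1,\<dots>,u\<^sub>n] = \<Sum>\<^sub>V R'[u\<^sub>1,\<dots>] \<circ> w(V)\<close>.
  For constant arguments a last block of size 1 contributes \<open>a\<^sup>0(u)\<close> and one of size
  \<open>n - i \<ge> 2\<close> contributes \<open>M(\<gamma>[u R'_(n-i-2)[u](u)])\<close>.\<close>

lemma split_blocks_length_le: "blk \<in> set (split_blocks c us) \<Longrightarrow> length blk \<le> length us"
proof (induction c arbitrary: us)
  case (Cons b c)
  then show ?case by (auto dest!: Cons.IH)
qed simp

lemma Rfuel_fuel_irrelevant:
  "length us \<le> m \<Longrightarrow> length us \<le> m' \<Longrightarrow> Rfuel \<gamma> \<Lambda> m us = Rfuel \<gamma> \<Lambda> m' us"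
proof (induction m arbitrary: m' us)
  case 0
  then show ?case by (cases m') auto
next
  case (Suc m)
  show ?case
  proof (cases m')
    case 0
    then show ?thesis using Suc.prems by simp
  next
    case (Suc m'')
    have inner: "Rfuel \<gamma> \<Lambda> m (butlast (tl blk)) = Rfuel \<gamma> \<Lambda> m'' (butlast (tl blk))"
      if "blk \<in> set (split_blocks c us)" "us \<noteq> []" for c blk
    proof (rule Suc.IH)
      have "length blk \<le> length us" using that(1) by (rule split_blocks_length_le)
      then show "length (butlast (tl blk)) \<le> m" "length (butlast (tl blk)) \<le> m''"
        using Suc.prems \<open>m' = Suc m''\<close> that(2) by (auto simp: Suc_le_eq)
    qed
    show ?thesis
      using inner \<open>m' = Suc m''\<close>
      by (auto intro!: sum.cong arg_cong[where f="\<lambda>l. foldr (\<circ>) l id _"] cong: map_cong)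
  qed
qed

definition block_op :: "('a::ring_1 \<Rightarrow> 'a) \<Rightarrow> ('a \<Rightarrow> 'a \<Rightarrow> 'a) \<Rightarrow> 'a list \<Rightarrow> 'a \<Rightarrow> 'a" where
  "block_op \<gamma> \<Lambda> blk = (if length blk = 1 then \<Lambda> (hd blk)
      else (\<lambda>x. \<gamma> (hd blk * Rprime \<gamma> \<Lambda> (butlast (tl blk)) (last blk)) * x))"

lemma compositions_0: "compositions 0 = {[]}"
  unfolding compositions_def by auto (metis list.set_sel(1) less_irrefl)

lemma Rprime_eq_sum_compositions:
  "Rprime \<gamma> \<Lambda> us v =
     (\<Sum>c\<in>compositions (length us). foldr (\<circ>) (map (block_op \<gamma> \<Lambda>) (split_blocks c us)) id v)"
proof (cases us)
  case Nil
  then show ?thesis by (simp add: Rprime_def compositions_0)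
next
  case (Cons x xs)
  have "Rfuel \<gamma> \<Lambda> (length xs) (butlast (tl blk)) = Rprime \<gamma> \<Lambda> (butlast (tl blk))"
    if "blk \<in> set (split_blocks c us)" for c blk
    using split_blocks_length_le[OF that] Cons unfolding Rprime_def
    by (intro Rfuel_fuel_irrelevant) auto
  then show ?thesis
    using Cons unfolding Rprime_def[of _ _ us]
    by (auto simp: block_op_def intro!: sum.cong arg_cong[where f="\<lambda>l. foldr (\<circ>) l id _"]
        cong: map_cong)
qed

lemma finite_compositions: "finite (compositions k)"
proof (rule finite_subset)
  have "set c \<subseteq> {0..k} \<and> length c \<le> k" if "c \<in> compositions k" for c
  proof -
    from that have pos: "\<forall>b\<in>set c. 0 < b" and sum: "sum_list c = k"
      by (auto simp: compositions_def)
    from pos have "length c \<le> sum_list c" by (induction c) auto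
    with sum show ?thesis by (auto simp: member_le_sum_list)
  qed
  then show "compositions k \<subseteq> {c. set c \<subseteq> {0..k} \<and> length c \<le> k}" by blast
  show "finite {c. set c \<subseteq> {0..k} \<and> length c \<le> k}"
    by (rule finite_lists_length_le) simp
qed

lemma compositions_snoc:
  assumes "k \<ge> 1"
  shows "compositions k = (\<lambda>(b, c). c @ [b]) ` Sigma {1..k} (\<lambda>b. compositions (k - b))"
proof
  show "compositions k \<subseteq> (\<lambda>(b, c). c @ [b]) ` Sigma {1..k} (\<lambda>b. compositions (k - b))"
  proof
    fix c assume c: "c \<in> compositions k"
    then have "c \<noteq> []" using assms by (auto simp: compositions_def)
    then have snoc: "c = butlast c @ [last c]" by simp
    then have "sum_list c = sum_list (butlast c) + last c"
      by (metis sum_list_append sum_list_simps add_0_right)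
    moreover have "last c > 0" using c \<open>c \<noteq> []\<close> by (auto simp: compositions_def)
    ultimately have "(last c, butlast c) \<in> Sigma {1..k} (\<lambda>b. compositions (k - b))"
      using c by (auto simp: compositions_def dest: in_set_butlastD)
    with snoc show "c \<in> (\<lambda>(b, c). c @ [b]) ` Sigma {1..k} (\<lambda>b. compositions (k - b))"
      by (auto intro!: image_eqI[where x="(last c, butlast c)"])
  qed
qed (auto simp: compositions_def)

lemma split_blocks_take: "split_blocks c us = split_blocks c (take (sum_list c) us)"
  by (induction c arbitrary: us) (auto simp: drop_take)

lemma split_blocks_append:
  "split_blocks (c @ d) us = split_blocks c us @ split_blocks d (drop (sum_list c) us)"
  by (induction c arbitrary: us) (auto simp: add.commute)

lemma foldr_comp_apply: "foldr (\<circ>) fs g v = foldr (\<circ>) fs id (g v)"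
  by (induction fs arbitrary: v) auto

lemma Rprime_last_block:
  assumes "us \<noteq> []"
  shows "Rprime \<gamma> \<Lambda> us v = (\<Sum>b=1..length us.
           Rprime \<gamma> \<Lambda> (take (length us - b) us) (block_op \<gamma> \<Lambda> (drop (length us - b) us) v))"
proof -
  define k where "k = length us"
  with assms have "k \<ge> 1" by (simp add: Suc_leI)
  define F where "F c = foldr (\<circ>) (map (block_op \<gamma> \<Lambda>) (split_blocks c us)) id v" for c
  have last_block: "F (c @ [b]) =
      foldr (\<circ>) (map (block_op \<gamma> \<Lambda>) (split_blocks c (take (k - b) us))) id
        (block_op \<gamma> \<Lambda> (drop (k - b) us) v)"
    if "b \<in> {1..k}" "c \<in> compositions (k - b)" for b c
  proof -
    have sum: "sum_list c = k - b" using that(2) by (simp add: compositions_def)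
    have "split_blocks (c @ [b]) us = split_blocks c (take (k - b) us) @ [drop (k - b) us]"
      using split_blocks_append[of c "[b]" us] split_blocks_take[of c us] that(1) k_def
      by (simp add: sum)
    then show ?thesis
      unfolding F_def by (simp add: foldr_comp_apply[of _ "block_op \<gamma> \<Lambda> _"])
  qed
  have "Rprime \<gamma> \<Lambda> us v = (\<Sum>c\<in>compositions k. F c)"
    unfolding Rprime_eq_sum_compositions F_def k_def ..
  also have "\<dots> = (\<Sum>(b, c)\<in>Sigma {1..k} (\<lambda>b. compositions (k - b)). F (c @ [b]))"
    unfolding compositions_snoc[OF \<open>k \<ge> 1\<close>]
    by (subst sum.reindex) (auto simp: inj_on_def case_prod_beta)
  also have "\<dots> = (\<Sum>b=1..k. \<Sum>c\<in>compositions (k - b). F (c @ [b]))"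
    by (rule sum.Sigma[symmetric]) (auto simp: finite_compositions)
  also have "\<dots> = (\<Sum>b=1..k.
      Rprime \<gamma> \<Lambda> (take (k - b) us) (block_op \<gamma> \<Lambda> (drop (k - b) us) v))"
  proof (intro sum.cong refl)
    fix b assume b: "b \<in> {1..k}"
    then have len: "length (take (k - b) us) = k - b" using k_def by simp
    show "(\<Sum>c\<in>compositions (k - b). F (c @ [b])) =
        Rprime \<gamma> \<Lambda> (take (k - b) us) (block_op \<gamma> \<Lambda> (drop (k - b) us) v)"
      unfolding Rprime_eq_sum_compositions len using b by (intro sum.cong refl) (simp add: last_block)
  qed
  finally show ?thesis unfolding k_def .
qed

lemma Rn_last_block:
  assumes "n \<ge> 1"
  shows "Rn \<gamma> \<Lambda> n u v = (\<Sum>b=1..n. Rn \<gamma> \<Lambda> (n - b) u (block_op \<gamma> \<Lambda> (replicate b u) v))"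
  using assms Rprime_last_block[of "replicate n u" \<gamma> \<Lambda> v]
  by (simp add: Rn_def)

lemma block_op_singleton: "block_op \<gamma> \<Lambda> [u] = \<Lambda> u"
  by (simp add: block_op_def)

lemma butlast_replicate: "butlast (replicate n x) = replicate (n - 1) x"
proof (cases n)
  case (Suc m)
  then have "replicate n x = replicate m x @ [x]" by (simp add: replicate_append_same)
  then show ?thesis using Suc by simp
qed simp

lemma block_op_replicate:
  assumes "b \<ge> 2"
  shows "block_op \<gamma> \<Lambda> (replicate b u) v = \<gamma> (u * Rn \<gamma> \<Lambda> (b - 2) u u) * v"
proof -
  have "butlast (tl (replicate b u)) = replicate (b - 2) u"
    by (simp add: butlast_replicate)
  then show ?thesis
    using assms by (simp add: block_op_def Rn_def)
qed

theorem lemma3p12: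
  fixes sm :: "complex \<Rightarrow> 'a::ring_1 \<Rightarrow> 'a" and st :: "'a \<Rightarrow> 'a"
    and \<gamma> :: "'a \<Rightarrow> 'a" and \<Lambda> :: "'a \<Rightarrow> 'a \<Rightarrow> 'a" and u :: 'a and n :: nat
  assumes "star_algebra sm st" and "star_linear sm st \<gamma>" and "star_bilinear sm st \<Lambda>"
    and "n \<ge> 1"
  shows "Rn \<gamma> \<Lambda> n u =
    (\<lambda>v. (\<Sum>i<n - 1. Rn \<gamma> \<Lambda> i u (\<gamma> (u * Rn \<gamma> \<Lambda> (n - i - 2) u u) * v))
         + Rn \<gamma> \<Lambda> (n - 1) u (\<Lambda> u v))"
proof
  fix v
  let ?term = "\<lambda>b. Rn \<gamma> \<Lambda> (n - b) u (block_op \<gamma> \<Lambda> (replicate b u) v)"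
  have blocks: "{1..n} = insert 1 ((\<lambda>i. n - i) ` {..<n - 1})"
    using \<open>n \<ge> 1\<close>
  proof (intro equalityI subsetI)
    fix b assume "b \<in> {1..n}"
    then show "b \<in> insert 1 ((\<lambda>i. n - i) ` {..<n - 1})"
      by (cases "b = 1") (auto intro!: image_eqI[where x="n - b"])
  qed auto
  have "Rn \<gamma> \<Lambda> n u v = (\<Sum>b=1..n. ?term b)"
    using \<open>n \<ge> 1\<close> by (rule Rn_last_block)
  also have "\<dots> = ?term 1 + (\<Sum>b\<in>(\<lambda>i. n - i) ` {..<n - 1}. ?term b)"
    unfolding blocks by (rule sum.insert) auto
  also have "(\<Sum>b\<in>(\<lambda>i. n - i) ` {..<n - 1}. ?term b) = (\<Sum>i<n - 1. ?term (n - i))"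
    by (subst sum.reindex) (auto simp: inj_on_def)
  also have "(\<Sum>i<n - 1. ?term (n - i)) =
      (\<Sum>i<n - 1. Rn \<gamma> \<Lambda> i u (\<gamma> (u * Rn \<gamma> \<Lambda> (n - i - 2) u u) * v))"
    by (intro sum.cong refl) (auto simp: block_op_replicate diff_diff_add)
  finally show "Rn \<gamma> \<Lambda> n u v = (\<Sum>i<n - 1. Rn \<gamma> \<Lambda> i u (\<gamma> (u * Rn \<gamma> \<Lambda> (n - i - 2) u u) * v))
      + Rn \<gamma> \<Lambda> (n - 1) u (\<Lambda> u v)"
    using \<open>n \<ge> 1\<close> by (simp add: block_op_singleton add.commute)
qed

end
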